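(* Let $\mathcal{M}=(E_t,\mathcal{T})$ be a simple oriented matroid, let $k$ be an integer with $1\le k\le|\mathcal{T}|/2$, and put $h=\lfloor(|\mathcal{T}|-k+1)/2\rfloor$ and $\mathcal{P}=\bigcup_{e\in E_t}\binom{\mathcal{T}^+_e}{h}$. For a family $\mathcal{G}\subseteq\mathcal{P}$ write $U_{\mathcal{G}}=\bigcup_{G\in\mathcal{G}}G$. Then \[ \mathring{\kappa}^{\ast}_k(\mathcal{M})=\binom{|\mathcal{T}|/2}{k}2^k+\sum_{\substack{\mathcal{G}\subseteq\mathcal{P}:\\ 1\le\#\mathcal{G}\le\binom{|\mathcal{T}|-k}{h},\\ |U_{\mathcal{G}}|\le|\mathcal{T}|-k}}(-1)^{\#\mathcal{G}}\sum_{j=0}^{k}\binom{|U_{\mathcal{G}}\cup -U_{\mathcal{G}}|-|U_{\mathcal{G}}|}{j}\binom{\tfrac12\bigl(|\mathcal{T}|-|U_{\mathcal{G}}\cup-U_{\mathcal{G}}|\bigr)}{k-j}2^{k-j}. \]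
   Context: Let $t\ge 1$ and $E_t=\{1,\dots,t\}$. $\mathcal{M}=(E_t,\mathcal{T})$ is a simple oriented matroid (no loops, parallel or antiparallel elements) with set of topes $\mathcal{T}\subseteq\{+,-\}^{E_t}$, closed under negation (so $|\mathcal{T}|$ is even). For $e\in E_t$, the positive halfspace is $\mathcal{T}^+_e=\{T\in\mathcal{T}: T(e)=+\}$. For $G\subseteq\mathcal{T}$, $-G=\{-T:T\in G\}$. For a set $X$, $\binom{X}{j}$ denotes the family of $j$-element subsets of $X$. A tope committee for $\mathcal{M}$ is a subset $\mathcal{K}^{\ast}\subset\mathcal{T}$ with $|\{T\in\mathcal{K}^{\ast}: T(e)=+\}|>\tfrac12|\mathcal{K}^{\ast}|$ for every $e\in E_t$. $\mathring{\kappa}^{\ast}_k(\mathcal{M})$ is the number of tope committees of cardinality $k$ containing no pair of opposite topes $\{T,-T\}$. Binomial coefficients $\binom{n}{j}$ are $0$ when $j>n$ or $j<0$. *)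

theory Defs
  imports Main
begin

text \<open>Sign vectors on the ground set E are functions nat => int with values in
{-1,0,1} that vanish outside E (+ = 1, - = -1, 0 = 0).
Oriented matroids are given by the covector axioms (V0)-(V3).\<close>

definition sign_vector :: "nat set \<Rightarrow> (nat \<Rightarrow> int) \<Rightarrow> bool" where
  "sign_vector E X \<longleftrightarrow> (\<forall>e. X e \<in> {-1,0,1}) \<and> (\<forall>e. e \<notin> E \<longrightarrow> X e = 0)"

definition sv_neg :: "(nat \<Rightarrow> int) \<Rightarrow> (nat \<Rightarrow> int)" where
  "sv_neg X = (\<lambda>e. - X e)"

definition sv_comp :: "(nat \<Rightarrow> int) \<Rightarrow> (nat \<Rightarrow> int) \<Rightarrow> (nat \<Rightarrow> int)" where
  "sv_comp X Y = (\<lambda>e. if X e \<noteq> 0 then X e else Y e)"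

definition sv_sep :: "(nat \<Rightarrow> int) \<Rightarrow> (nat \<Rightarrow> int) \<Rightarrow> nat set" where
  "sv_sep X Y = {e. X e \<noteq> 0 \<and> Y e = - X e}"

definition oriented_matroid_covectors :: "nat set \<Rightarrow> (nat \<Rightarrow> int) set \<Rightarrow> bool" where
  "oriented_matroid_covectors E L \<longleftrightarrow>
     (\<forall>X\<in>L. sign_vector E X) \<and>
     (\<lambda>_. 0) \<in> L \<and>
     (\<forall>X\<in>L. sv_neg X \<in> L) \<and>
     (\<forall>X\<in>L. \<forall>Y\<in>L. sv_comp X Y \<in> L) \<and>
     (\<forall>X\<in>L. \<forall>Y\<in>L. \<forall>e\<in>sv_sep X Y. \<exists>Z\<in>L. Z e = 0 \<and>
         (\<forall>f\<in>E. f \<notin> sv_sep X Y \<longrightarrow> Z f = sv_comp X Y f))"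

definition simple_om :: "nat set \<Rightarrow> (nat \<Rightarrow> int) set \<Rightarrow> bool" where
  "simple_om E L \<longleftrightarrow> oriented_matroid_covectors E L \<and>
     (\<forall>e\<in>E. \<exists>X\<in>L. X e \<noteq> 0) \<and>
     (\<forall>e\<in>E. \<forall>f\<in>E. e \<noteq> f \<longrightarrow>
        \<not> (\<forall>X\<in>L. X e = X f) \<and> \<not> (\<forall>X\<in>L. X e = - X f))"

text \<open>Topes: the maximal covectors; for a loopless oriented matroid these are
exactly the covectors with full support E.\<close>
definition topes :: "nat set \<Rightarrow> (nat \<Rightarrow> int) set \<Rightarrow> (nat \<Rightarrow> int) set" where
  "topes E L = {X\<in>L. \<forall>e\<in>E. X e \<noteq> 0}"

definition pos_halfspace :: "(nat \<Rightarrow> int) set \<Rightarrow> nat \<Rightarrow> (nat \<Rightarrow> int) set" where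
  "pos_halfspace T e = {X\<in>T. X e = 1}"

definition tope_committee :: "nat set \<Rightarrow> (nat \<Rightarrow> int) set \<Rightarrow> (nat \<Rightarrow> int) set \<Rightarrow> bool" where
  "tope_committee E T K \<longleftrightarrow> K \<subset> T \<and>
     (\<forall>e\<in>E. 2 * card {X\<in>K. X e = 1} > card K)"

definition kappa_ring :: "nat set \<Rightarrow> (nat \<Rightarrow> int) set \<Rightarrow> nat \<Rightarrow> nat" where
  "kappa_ring E L k = card {K. tope_committee E (topes E L) K \<and> card K = k \<and>
      (\<forall>X\<in>K. sv_neg X \<notin> K)}"

end

theory Submission
  imports Defs
begin

text \<open>
  Only two properties of the tope set
  \<open>T\<close> are used: it is closed under negation and every tope is \<open>\<plusminus>1\<close> on the ground set;
  we call such a set a symmetric sign set and prove the formula for all of them.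

  Write \<open>n = |T|\<close> and \<open>h = \<lfloor>(n - k + 1)/2\<rfloor>\<close>.  Each positive halfspace has \<open>n/2\<close> elements, so
  a \<open>k\<close>-set \<open>K\<close> has a strict majority on \<open>e\<close> iff it meets every \<open>h\<close>-subset of
  \<open>T\<^sup>+\<^sub>e\<close>.  Hence committees are the antipodal-free \<open>k\<close>-sets meeting every member of
  \<open>\<P>\<close>, and inclusion-exclusion over subfamilies \<open>\<G> \<subseteq> \<P>\<close> reduces the count to the
  numbers of antipodal-free \<open>k\<close>-sets in \<open>T - U\<^sub>\<G>\<close>.  These are computed by a convolution
  rule: \<open>T - U\<^sub>\<G>\<close> is the disjoint union of the negatives of \<open>U\<^sub>\<G>\<close> outside \<open>U\<^sub>\<G>\<close>
  (free elements) and \<open>(T - (U\<^sub>\<G> \<union> -U\<^sub>\<G>))/2\<close> antipodal pairs.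
\<close>

definition antipodal_free :: "('a \<Rightarrow> 'a) \<Rightarrow> 'a set \<Rightarrow> nat \<Rightarrow> 'a set set" where
  "antipodal_free f S m = {K. K \<subseteq> S \<and> card K = m \<and> (\<forall>x\<in>K. f x \<notin> K)}"

lemma finite_antipodal_free: "finite S \<Longrightarrow> finite (antipodal_free f S m)"
  unfolding antipodal_free_def by (rule finite_subset[of _ "Pow S"]) auto

lemma card_antipodal_free_no_partners:
  assumes "finite S" and "\<forall>x\<in>S. f x \<notin> S"
  shows "card (antipodal_free f S m) = card S choose m"
proof -
  have "antipodal_free f S m = {K. K \<subseteq> S \<and> card K = m}"
    using assms(2) unfolding antipodal_free_def by blast
  then show ?thesis using n_subsets[OF assms(1)] by simp
qed

lemma card_traces:
  assumes "finite S1" "finite S2" and "S1 \<inter> S2 = {}" and "K \<subseteq> S1 \<union> S2"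
  shows "card K = card (K \<inter> S1) + card (K \<inter> S2)"
proof -
  have "K = (K \<inter> S1) \<union> (K \<inter> S2)" using assms(4) by blast
  moreover have "finite K" using assms(1,2,4) finite_subset by blast
  moreover have "(K \<inter> S1) \<inter> (K \<inter> S2) = {}" using assms(3) by blast
  ultimately show ?thesis using card_Un_disjoint[of "K \<inter> S1" "K \<inter> S2"] by simp
qed

lemma antipodal_free_Un_bij:
  assumes fin: "finite S1" "finite S2" and disj: "S1 \<inter> S2 = {}"
    and sep: "\<forall>x\<in>S1. f x \<notin> S2" "\<forall>x\<in>S2. f x \<notin> S1" and "j \<le> k"
  shows "bij_betw (\<lambda>K. (K \<inter> S1, K \<inter> S2))
           {K \<in> antipodal_free f (S1 \<union> S2) k. card (K \<inter> S1) = j}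
           (antipodal_free f S1 j \<times> antipodal_free f S2 (k - j))"
proof (rule bij_betw_byWitness[where f'="\<lambda>(J, K). J \<union> K"])
  show "\<forall>K\<in>{K \<in> antipodal_free f (S1 \<union> S2) k. card (K \<inter> S1) = j}.
          (\<lambda>(J, K). J \<union> K) (K \<inter> S1, K \<inter> S2) = K"
    unfolding antipodal_free_def by auto
  show "\<forall>p\<in>antipodal_free f S1 j \<times> antipodal_free f S2 (k - j).
          (\<lambda>K. (K \<inter> S1, K \<inter> S2)) ((\<lambda>(J, K). J \<union> K) p) = p"
    unfolding antipodal_free_def using disj by auto
  show "(\<lambda>K. (K \<inter> S1, K \<inter> S2)) ` {K \<in> antipodal_free f (S1 \<union> S2) k. card (K \<inter> S1) = j}
          \<subseteq> antipodal_free f S1 j \<times> antipodal_free f S2 (k - j)"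
  proof (rule image_subsetI)
    fix K assume "K \<in> {K \<in> antipodal_free f (S1 \<union> S2) k. card (K \<inter> S1) = j}"
    then have K: "K \<subseteq> S1 \<union> S2" "card K = k" "\<forall>x\<in>K. f x \<notin> K" "card (K \<inter> S1) = j"
      unfolding antipodal_free_def by auto
    then have "card (K \<inter> S2) = k - j" using card_traces[OF fin disj K(1)] by simp
    then show "(K \<inter> S1, K \<inter> S2) \<in> antipodal_free f S1 j \<times> antipodal_free f S2 (k - j)"
      using K unfolding antipodal_free_def by auto
  qed
  show "(\<lambda>(J, K). J \<union> K) ` (antipodal_free f S1 j \<times> antipodal_free f S2 (k - j))
          \<subseteq> {K \<in> antipodal_free f (S1 \<union> S2) k. card (K \<inter> S1) = j}"
  proof clarify
    fix J K assume J: "J \<in> antipodal_free f S1 j" and K: "K \<in> antipodal_free f S2 (k - j)"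
    then have parts: "J \<subseteq> S1" "K \<subseteq> S2" "(J \<union> K) \<inter> S1 = J" "(J \<union> K) \<inter> S2 = K"
      unfolding antipodal_free_def using disj by auto
    have "card (J \<union> K) = k"
      using card_traces[OF fin disj, of "J \<union> K"] parts J K \<open>j \<le> k\<close>
      unfolding antipodal_free_def by auto
    moreover have "f x \<notin> J \<union> K" if "x \<in> J \<union> K" for x
    proof -
      have "\<forall>y\<in>J. f y \<notin> J" "\<forall>y\<in>K. f y \<notin> K"
        using J K unfolding antipodal_free_def by auto
      then show ?thesis using that parts(1,2) sep by blast
    qed
    ultimately show "J \<union> K \<in> antipodal_free f (S1 \<union> S2) k \<and> card ((J \<union> K) \<inter> S1) = j"
      using parts J unfolding antipodal_free_def by auto
  qed
qed

lemma card_antipodal_free_Un: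
  assumes fin: "finite S1" "finite S2" and disj: "S1 \<inter> S2 = {}"
    and sep: "\<forall>x\<in>S1. f x \<notin> S2" "\<forall>x\<in>S2. f x \<notin> S1"
  shows "card (antipodal_free f (S1 \<union> S2) k) =
           (\<Sum>j=0..k. card (antipodal_free f S1 j) * card (antipodal_free f S2 (k - j)))"
proof -
  define A where "A = antipodal_free f (S1 \<union> S2) k"
  define fibre where "fibre j = {K\<in>A. card (K \<inter> S1) = j}" for j
  have A_fibres: "A = (\<Union>j\<in>{0..k}. fibre j)"
  proof (intro equalityI subsetI)
    fix K assume "K \<in> A"
    then have "card (K \<inter> S1) \<le> k"
      using card_traces[OF fin disj] unfolding A_def antipodal_free_def by force
    then show "K \<in> (\<Union>j\<in>{0..k}. fibre j)" using \<open>K \<in> A\<close> unfolding fibre_def by auto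
  qed (auto simp: fibre_def)
  have "card A = (\<Sum>j=0..k. card (fibre j))"
    unfolding A_fibres
    by (rule card_UN_disjoint)
       (auto simp: fibre_def A_def intro: finite_subset[OF _ finite_antipodal_free] fin)
  also have "\<dots> = (\<Sum>j=0..k. card (antipodal_free f S1 j) * card (antipodal_free f S2 (k - j)))"
    using bij_betw_same_card[OF antipodal_free_Un_bij[OF fin disj sep]]
    unfolding fibre_def A_def by (simp add: card_cartesian_product)
  finally show ?thesis unfolding A_def .
qed

text \<open>A single pair \<open>{a, f a}\<close> admits the empty set and two singletons.\<close>
lemma card_antipodal_free_pair:
  assumes "f a \<noteq> a" and "f (f a) = a"
  shows "card (antipodal_free f {a, f a} j) = (1 choose j) * 2 ^ j"
proof -
  have subsets: "K \<subseteq> {a, f a} \<longleftrightarrow> K \<in> {{}, {a}, {f a}, {a, f a}}" for K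
    by (simp flip: Pow_iff add: Pow_insert insert_commute)
  have eq: "antipodal_free f {a, f a} j = {K \<in> {{}, {a}, {f a}}. card K = j}"
    unfolding antipodal_free_def subsets using assms by auto
  consider "j = 0" | "j = 1" | "j \<ge> 2" by linarith
  then show ?thesis
  proof cases
    case 1
    then have "antipodal_free f {a, f a} j = {{}}" unfolding eq by auto
    then show ?thesis using 1 by simp
  next
    case 2
    then have "antipodal_free f {a, f a} j = {{a}, {f a}}" unfolding eq by auto
    then show ?thesis using 2 assms(1) by (simp add: card_insert_if)
  next
    case 3
    then have "antipodal_free f {a, f a} j = {}" unfolding eq by auto
    then show ?thesis using 3 by simp
  qed
qed

text \<open>A set made of \<open>|R|\<close> disjoint pairs \<open>{r, f r}\<close>: choose \<open>m\<close> pairs and one element of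
  each.  Induction on \<open>R\<close>, splitting off one pair with the convolution rule and
  closing with Vandermonde's identity.\<close>
lemma card_antipodal_free_pairs:
  assumes "finite R" and "R \<inter> f ` R = {}" and "\<forall>x\<in>R. f (f x) = x"
  shows "card (antipodal_free f (R \<union> f ` R) m) = (card R choose m) * 2 ^ m"
  using assms
proof (induction R arbitrary: m rule: finite_induct)
  case empty
  have "antipodal_free f {} m = (if m = 0 then {{}} else {})"
    unfolding antipodal_free_def by auto
  then show ?case by simp
next
  case (insert r R)
  have fr: "f r \<noteq> r" "f (f r) = r" using insert.prems by auto
  have disj: "{r, f r} \<inter> (R \<union> f ` R) = {}"
  proof -
    have "f r \<notin> f ` R"
    proof
      assume "f r \<in> f ` R"
      then obtain x where "x \<in> R" "f r = f x" by blast
      then have "r = x" using insert.prems by (metis insertCI)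
      then show False using \<open>x \<in> R\<close> insert.hyps(2) by blast
    qed
    then show ?thesis using insert.hyps(2) insert.prems(1) by blast
  qed
  have closed: "\<forall>x\<in>R \<union> f ` R. f x \<in> R \<union> f ` R" using insert.prems(2) by auto
  then have sep: "\<forall>x\<in>R \<union> f ` R. f x \<notin> {r, f r}" "\<forall>x\<in>{r, f r}. f x \<notin> R \<union> f ` R"
    using disj fr(2) by blast+
  have IH: "card (antipodal_free f (R \<union> f ` R) i) = (card R choose i) * 2 ^ i" for i
  proof (rule insert.IH)
    show "R \<inter> f ` R = {}" using insert.prems(1) by auto
    show "\<forall>x\<in>R. f (f x) = x" using insert.prems(2) by simp
  qed
  have "card (antipodal_free f (insert r R \<union> f ` insert r R) m)
      = card (antipodal_free f ({r, f r} \<union> (R \<union> f ` R)) m)"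
    by (simp add: insert_commute)
  also have "\<dots> = (\<Sum>j=0..m. card (antipodal_free f {r, f r} j)
                              * card (antipodal_free f (R \<union> f ` R) (m - j)))"
    by (rule card_antipodal_free_Un[OF _ _ disj sep(2) sep(1)]) (simp_all add: insert.hyps(1))
  also have "\<dots> = (\<Sum>j=0..m. ((1 choose j) * 2 ^ j) * ((card R choose (m - j)) * 2 ^ (m - j)))"
    by (simp only: card_antipodal_free_pair[OF fr] IH)
  also have "\<dots> = (\<Sum>j=0..m. 2 ^ m * ((1 choose j) * (card R choose (m - j))))"
  proof (rule sum.cong[OF refl])
    fix j assume "j \<in> {0..m}"
    then have pow: "2 ^ j * 2 ^ (m - j) = (2::nat) ^ m" by (simp flip: power_add)
    have "(1 choose j) * 2 ^ j * ((card R choose (m - j)) * 2 ^ (m - j))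
            = (2 ^ j * 2 ^ (m - j)) * ((1 choose j) * (card R choose (m - j)))"
      by (simp only: ac_simps)
    then show "(1 choose j) * 2 ^ j * ((card R choose (m - j)) * 2 ^ (m - j))
                 = 2 ^ m * ((1 choose j) * (card R choose (m - j)))"
      by (simp only: pow)
  qed
  also have "\<dots> = 2 ^ m * (1 + card R choose m)"
    using vandermonde[of 1 "card R" m] by (simp only: atLeast0AtMost flip: sum_distrib_left)
  also have "\<dots> = (card (insert r R) choose m) * 2 ^ m"
    using insert.hyps by simp
  finally show ?case .
qed

lemma sv_neg_apply [simp]: "sv_neg X e = - X e"
  by (simp add: sv_neg_def)

lemma sv_neg_sv_neg [simp]: "sv_neg (sv_neg X) = X"
  by (simp add: sv_neg_def)

definition symmetric_sign_set :: "nat set \<Rightarrow> (nat \<Rightarrow> int) set \<Rightarrow> bool" where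
  "symmetric_sign_set E V \<longleftrightarrow> (\<forall>X\<in>V. sv_neg X \<in> V \<and> (\<forall>e\<in>E. X e = 1 \<or> X e = -1))"

lemma symmetric_sign_set_topes:
  assumes "oriented_matroid_covectors E L"
  shows "symmetric_sign_set E (topes E L)"
  unfolding symmetric_sign_set_def
proof
  fix X assume "X \<in> topes E L"
  then have X: "X \<in> L" "\<forall>e\<in>E. X e \<noteq> 0" unfolding topes_def by auto
  then have "sign_vector E X" "sv_neg X \<in> L"
    using assms unfolding oriented_matroid_covectors_def by auto
  then show "sv_neg X \<in> topes E L \<and> (\<forall>e\<in>E. X e = 1 \<or> X e = -1)"
    using X unfolding topes_def sign_vector_def by fastforce
qed

lemma halfspace_split:
  assumes "\<forall>X\<in>W. sv_neg X \<in> W \<and> (X e = 1 \<or> X e = -1)"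
  defines "R \<equiv> {X\<in>W. X e = 1}"
  shows "W = R \<union> sv_neg ` R" and "R \<inter> sv_neg ` R = {}"
proof -
  have "X \<in> sv_neg ` R" if "X \<in> W" "X e \<noteq> 1" for X
    using assms that by (intro image_eqI[of _ _ "sv_neg X"]) auto
  then show "W = R \<union> sv_neg ` R" using assms by auto
  show "R \<inter> sv_neg ` R = {}" unfolding R_def by auto
qed

lemma card_halfspace:
  assumes "finite W" and "\<forall>X\<in>W. sv_neg X \<in> W \<and> (X e = 1 \<or> X e = -1)"
  shows "card W = 2 * card {X\<in>W. X e = 1}"
proof -
  define R where "R = {X\<in>W. X e = 1}"
  have "inj_on sv_neg R" by (rule inj_onI) (metis sv_neg_sv_neg)
  moreover have "finite R" unfolding R_def using assms(1) by simp
  ultimately show ?thesis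
    using halfspace_split[OF assms(2)] card_Un_disjoint[of R "sv_neg ` R"]
    unfolding R_def by (simp add: card_image)
qed

text \<open>Antipodal-free sets in a negation-closed set: \<open>card W / 2\<close> pairs.\<close>
lemma card_antipodal_free_symmetric:
  assumes "finite W" and "\<forall>X\<in>W. sv_neg X \<in> W \<and> (X e = 1 \<or> X e = -1)"
  shows "card (antipodal_free sv_neg W m) = ((card W div 2) choose m) * 2 ^ m"
  using card_antipodal_free_pairs[of "{X\<in>W. X e = 1}" sv_neg m]
    halfspace_split[OF assms(2)] card_halfspace[OF assms] assms(1)
  by simp

text \<open>Antipodal-free \<open>k\<close>-sets avoiding \<open>U\<close>: the rest splits into the partners of \<open>U\<close> lying
  outside \<open>U\<close> (free elements, counted by a binomial coefficient) and the
  negation-closed remainder \<open>V - (U \<union> -U)\<close> (counted by pairs).\<close>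
lemma card_antipodal_free_complement:
  assumes fin: "finite V" and sym: "\<forall>X\<in>V. sv_neg X \<in> V \<and> (X e = 1 \<or> X e = -1)"
    and UV: "U \<subseteq> V"
  shows "card (antipodal_free sv_neg (V - U) k) =
           (\<Sum>j=0..k. ((card (U \<union> sv_neg ` U) - card U) choose j)
              * ((((card V - card (U \<union> sv_neg ` U)) div 2) choose (k - j)) * 2 ^ (k - j)))"
proof -
  define S1 where "S1 = sv_neg ` U - U"
  define S2 where "S2 = V - (U \<union> sv_neg ` U)"
  have neg_mem: "sv_neg X \<in> sv_neg ` U \<longleftrightarrow> X \<in> U" for X
    by (metis image_eqI imageE sv_neg_sv_neg)
  have UU: "U \<union> sv_neg ` U \<subseteq> V" using UV sym by blast
  have finU: "finite (U \<union> sv_neg ` U)" using UU fin finite_subset by blast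
  have split: "V - U = S1 \<union> S2" unfolding S1_def S2_def using UU by blast
  have sep: "S1 \<inter> S2 = {}" "\<forall>x\<in>S1. sv_neg x \<notin> S2" "\<forall>x\<in>S2. sv_neg x \<notin> S1"
    "\<forall>x\<in>S1. sv_neg x \<notin> S1"
    unfolding S1_def S2_def using neg_mem by auto
  have sym2: "\<forall>X\<in>S2. sv_neg X \<in> S2 \<and> (X e = 1 \<or> X e = -1)"
    unfolding S2_def using sym neg_mem by (metis DiffD1 DiffD2 DiffI UnCI UnE sv_neg_sv_neg)
  have "S1 = (U \<union> sv_neg ` U) - U" unfolding S1_def by blast
  then have card1: "card S1 = card (U \<union> sv_neg ` U) - card U"
    using finU by (simp add: card_Diff_subset)
  have card2: "card S2 = card V - card (U \<union> sv_neg ` U)"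
    unfolding S2_def using UU finU by (simp add: card_Diff_subset)
  have fin12: "finite S1" "finite S2" unfolding S1_def S2_def using finU fin by auto
  have "card (antipodal_free sv_neg (V - U) k)
          = (\<Sum>j=0..k. card (antipodal_free sv_neg S1 j) * card (antipodal_free sv_neg S2 (k - j)))"
    unfolding split using card_antipodal_free_Un[OF fin12 sep(1-3)] .
  also have "\<dots> = (\<Sum>j=0..k. (card S1 choose j) * (((card S2 div 2) choose (k - j)) * 2 ^ (k - j)))"
    by (simp only: card_antipodal_free_no_partners[OF fin12(1) sep(4)]
        card_antipodal_free_symmetric[OF fin12(2) sym2])
  finally show ?thesis unfolding card1 card2 .
qed

lemma exists_disjoint_subset_iff:
  assumes "finite A"
  shows "(\<exists>G. G \<subseteq> A \<and> card G = h \<and> G \<inter> K = {}) \<longleftrightarrow> h \<le> card (A - K)"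
proof
  assume "\<exists>G. G \<subseteq> A \<and> card G = h \<and> G \<inter> K = {}"
  then obtain G where "G \<subseteq> A - K" "card G = h" by blast
  then show "h \<le> card (A - K)" using assms by (metis card_mono finite_Diff)
next
  assume "h \<le> card (A - K)"
  then obtain G where "G \<subseteq> A - K" "card G = h" by (metis obtain_subset_with_card_n)
  then show "\<exists>G. G \<subseteq> A \<and> card G = h \<and> G \<inter> K = {}" by blast
qed

text \<open>The arithmetic behind the blocking sets: with \<open>n = 2q\<close>, \<open>k\<close> voters have a strict
  majority \<open>p\<close> in a halfspace of size \<open>q\<close> iff fewer than \<open>h = \<lfloor>(n - k + 1)/2\<rfloor>\<close> elements of
  the halfspace are missed.\<close>
lemma strict_majority_iff:
  fixes k p q :: nat
  assumes "2 * k \<le> 2 * q" and "p \<le> q"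
  shows "k < 2 * p \<longleftrightarrow> \<not> (2 * q - k + 1) div 2 \<le> q - p"
  using assms by presburger

definition committees :: "nat set \<Rightarrow> (nat \<Rightarrow> int) set \<Rightarrow> nat \<Rightarrow> (nat \<Rightarrow> int) set set" where
  "committees E V k = {K. tope_committee E V K \<and> card K = k \<and> (\<forall>X\<in>K. sv_neg X \<notin> K)}"

definition halfspace_blocks :: "nat set \<Rightarrow> (nat \<Rightarrow> int) set \<Rightarrow> nat \<Rightarrow> (nat \<Rightarrow> int) set set" where
  "halfspace_blocks E V h = (\<Union>e\<in>E. {G. G \<subseteq> pos_halfspace V e \<and> card G = h})"

lemma majority_iff_meets_blocks:
  assumes fin: "finite V" and sym: "symmetric_sign_set E V" and e: "e \<in> E"
    and kV: "2 * k \<le> card V" and KV: "K \<subseteq> V" and "card K = k"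
  shows "k < 2 * card {X\<in>K. X e = 1} \<longleftrightarrow>
           (\<forall>G. G \<subseteq> pos_halfspace V e \<and> card G = (card V - k + 1) div 2 \<longrightarrow> G \<inter> K \<noteq> {})"
proof -
  define H where "H = pos_halfspace V e"
  have finH: "finite H" unfolding H_def pos_halfspace_def using fin by simp
  have cardV: "card V = 2 * card H"
    using card_halfspace[OF fin] sym e unfolding H_def pos_halfspace_def symmetric_sign_set_def by blast
  have KH: "{X\<in>K. X e = 1} = H \<inter> K" using KV unfolding H_def pos_halfspace_def by auto
  have "card (H - K) = card H - card (H \<inter> K)" using finH by (simp add: card_Diff_subset_Int)
  moreover have "card (H \<inter> K) \<le> card H" using finH by (simp add: card_mono)
  ultimately have "k < 2 * card (H \<inter> K) \<longleftrightarrow> \<not> (card V - k + 1) div 2 \<le> card (H - K)"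
    using strict_majority_iff[of k "card H" "card (H \<inter> K)"] kV cardV by simp
  then show ?thesis
    using exists_disjoint_subset_iff[OF finH, of "(card V - k + 1) div 2" K]
    unfolding KH H_def by blast
qed

text \<open>Committees are the antipodal-free \<open>k\<close>-sets meeting every member of \<open>\<P>\<close>; the
  bound \<open>1 \<le> k\<close> makes a \<open>k\<close>-set automatically a proper subset.\<close>
lemma committees_eq_unblocked:
  assumes fin: "finite V" and sym: "symmetric_sign_set E V"
    and k: "1 \<le> k" "2 * k \<le> card V"
  defines "A \<equiv> antipodal_free sv_neg V k"
    and "\<P> \<equiv> halfspace_blocks E V ((card V - k + 1) div 2)"
  shows "committees E V k = A - (\<Union>G\<in>\<P>. {K\<in>A. G \<inter> K = {}})"
proof -
  have "K \<in> committees E V k \<longleftrightarrow> (\<forall>G\<in>\<P>. G \<inter> K \<noteq> {})" if KA: "K \<in> A" for K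
  proof -
    have K: "K \<subseteq> V" "card K = k" "\<forall>X\<in>K. sv_neg X \<notin> K"
      using KA unfolding A_def antipodal_free_def by auto
    have "K \<noteq> V" using K(2) k by auto
    then have "K \<in> committees E V k \<longleftrightarrow> (\<forall>e\<in>E. k < 2 * card {X\<in>K. X e = 1})"
      using K unfolding committees_def tope_committee_def by auto
    also have "\<dots> \<longleftrightarrow> (\<forall>e\<in>E. \<forall>G. G \<subseteq> pos_halfspace V e \<and> card G = (card V - k + 1) div 2
                                  \<longrightarrow> G \<inter> K \<noteq> {})"
      using majority_iff_meets_blocks[OF fin sym _ k(2) K(1,2)] by (simp cong: ball_cong)
    also have "\<dots> \<longleftrightarrow> (\<forall>G\<in>\<P>. G \<inter> K \<noteq> {})"
      unfolding \<P>_def halfspace_blocks_def by blast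
    finally show ?thesis .
  qed
  moreover have "committees E V k \<subseteq> A"
    unfolding committees_def tope_committee_def A_def antipodal_free_def by auto
  ultimately show ?thesis by blast
qed

lemma int_card_Diff_UN_sieve:
  assumes "finite A" and "finite I" and "\<forall>i\<in>I. B i \<subseteq> A"
  shows "int (card (A - (\<Union>i\<in>I. B i))) =
           int (card A) + (\<Sum>J | J \<subseteq> I \<and> J \<noteq> {}. (-1) ^ card J * int (card (\<Inter>(B ` J))))"
proof -
  interpret Incl_Excl finite "int \<circ> card"
    by unfold_locales (auto simp: card_Un_disjnt)
  have "int (card (\<Union>i\<in>I. B i)) =
          (\<Sum>J | J \<subseteq> I \<and> J \<noteq> {}. (-1) ^ (card J + 1) * int (card (\<Inter>(B ` J))))"
    using restricted_indexed[of I B] assms by (auto intro: finite_subset)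
  moreover have "card (A - (\<Union>i\<in>I. B i)) = card A - card (\<Union>i\<in>I. B i)"
    using assms by (intro card_Diff_subset) (auto intro: finite_subset)
  moreover have "card (\<Union>i\<in>I. B i) \<le> card A"
    using assms by (intro card_mono) auto
  ultimately show ?thesis by (simp add: of_nat_diff sum_negf)
qed

lemma antipodal_free_too_small:
  assumes "finite S" and "card S < m"
  shows "antipodal_free f S m = {}"
  using assms card_mono unfolding antipodal_free_def by fastforce

lemma card_uniform_family_le:
  assumes "finite (\<Union>\<G>)" and "\<forall>G\<in>\<G>. card G = h"
  shows "card \<G> \<le> card (\<Union>\<G>) choose h"
proof -
  have "\<G> \<subseteq> {G. G \<subseteq> \<Union>\<G> \<and> card G = h}" using assms(2) by blast
  then have "card \<G> \<le> card {G. G \<subseteq> \<Union>\<G> \<and> card G = h}"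
    by (rule card_mono[rotated]) (use assms(1) in \<open>auto intro: finite_subset[of _ "Pow (\<Union>\<G>)"]\<close>)
  then show ?thesis by (simp add: n_subsets[OF assms(1)])
qed

lemma int_card_committees_sieve:
  assumes fin: "finite V" and sym: "symmetric_sign_set E V"
    and k: "1 \<le> k" "2 * k \<le> card V"
    and \<P>_def: "\<P> = halfspace_blocks E V ((card V - k + 1) div 2)"
  shows "int (card (committees E V k)) = int (card (antipodal_free sv_neg V k)) +
           (\<Sum>\<G> | \<G> \<subseteq> \<P> \<and> \<G> \<noteq> {}.
              (-1) ^ card \<G> * int (card (antipodal_free sv_neg (V - \<Union>\<G>) k)))"
proof -
  define A where "A = antipodal_free sv_neg V k"
  define B where "B G = {K\<in>A. G \<inter> K = {}}" for G
  have "\<P> \<subseteq> Pow V" unfolding \<P>_def halfspace_blocks_def pos_halfspace_def by auto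
  then have finP: "finite \<P>" using fin by (simp add: finite_subset)
  have finA: "finite A" unfolding A_def using finite_antipodal_free[OF fin] .
  have inter_B: "\<Inter>(B ` \<G>) = antipodal_free sv_neg (V - \<Union>\<G>) k" if "\<G> \<noteq> {}" for \<G>
    using that unfolding B_def A_def antipodal_free_def by blast
  have "committees E V k = A - (\<Union>G\<in>\<P>. B G)"
    unfolding committees_eq_unblocked[OF fin sym k] A_def[symmetric] B_def \<P>_def ..
  then have "int (card (committees E V k)) =
               int (card A) + (\<Sum>\<G> | \<G> \<subseteq> \<P> \<and> \<G> \<noteq> {}. (-1) ^ card \<G> * int (card (\<Inter>(B ` \<G>))))"
    using int_card_Diff_UN_sieve[OF finA finP, of B] unfolding B_def by simp
  then show ?thesis unfolding A_def[symmetric] by (simp add: inter_B)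
qed

text \<open>Only small subfamilies contribute: if some antipodal-free \<open>k\<close>-set avoids \<open>\<Union>\<G>\<close>, then
  \<open>|\<Union>\<G>| \<le> n - k\<close>, and \<open>\<G>\<close>, a family of \<open>h\<close>-subsets of \<open>\<Union>\<G>\<close>, has at most
  \<open>binom (n - k) h\<close> members.\<close>
lemma contributing_families_small:
  assumes fin: "finite V" and \<G>: "\<G> \<subseteq> halfspace_blocks E V h" "\<G> \<noteq> {}"
    and nonempty: "antipodal_free f (V - \<Union>\<G>) k \<noteq> {}"
  shows "1 \<le> card \<G> \<and> card \<G> \<le> (card V - k) choose h \<and> card (\<Union>\<G>) \<le> card V - k"
proof -
  have UV: "\<Union>\<G> \<subseteq> V" using \<G>(1) unfolding halfspace_blocks_def pos_halfspace_def by auto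
  have finU: "finite (\<Union>\<G>)" using UV fin finite_subset by blast
  have "k \<le> card (V - \<Union>\<G>)" using nonempty antipodal_free_too_small fin by (meson finite_Diff not_le)
  then have small: "card (\<Union>\<G>) \<le> card V - k"
    using UV finU card_mono[OF fin UV] by (simp add: card_Diff_subset)
  have "card \<G> \<le> card (\<Union>\<G>) choose h"
    using card_uniform_family_le[OF finU] \<G>(1) unfolding halfspace_blocks_def by blast
  also have "\<dots> \<le> (card V - k) choose h" using small by (rule binomial_right_mono)
  finally show ?thesis
    using small \<G>(2) finU by (simp add: Suc_leI card_gt_0_iff finite_UnionD)
qed

lemma int_card_committees:
  assumes fin: "finite V" and sym: "symmetric_sign_set E V" and e: "e \<in> E"
    and k: "1 \<le> k" "2 * k \<le> card V"
    and n_def: "n = card V" and h_def: "h = (n - k + 1) div 2" and \<P>_def: "\<P> = halfspace_blocks E V h"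
  shows "int (card (committees E V k)) = int ((n div 2) choose k) * 2 ^ k +
           (\<Sum>\<G>\<in>{\<G>. \<G> \<subseteq> \<P> \<and> 1 \<le> card \<G> \<and> card \<G> \<le> (n - k) choose h \<and> card (\<Union>\<G>) \<le> n - k}.
              (-1) ^ card \<G> *
              (\<Sum>j=0..k. int ((card (\<Union>\<G> \<union> sv_neg ` \<Union>\<G>) - card (\<Union>\<G>)) choose j)
                   * int (((n - card (\<Union>\<G> \<union> sv_neg ` \<Union>\<G>)) div 2) choose (k - j))
                   * 2 ^ (k - j)))"
proof -
  define avoiding where "avoiding \<G> = int (card (antipodal_free sv_neg (V - \<Union>\<G>) k))" for \<G>
  define small_families where "small_families =
    {\<G>. \<G> \<subseteq> \<P> \<and> 1 \<le> card \<G> \<and> card \<G> \<le> (n - k) choose h \<and> card (\<Union>\<G>) \<le> n - k}"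
  have sym_e: "\<forall>X\<in>V. sv_neg X \<in> V \<and> (X e = 1 \<or> X e = -1)"
    using sym e unfolding symmetric_sign_set_def by blast
  have "\<P> \<subseteq> Pow V" unfolding \<P>_def halfspace_blocks_def pos_halfspace_def by auto
  then have finP: "finite \<P>" using fin by (simp add: finite_subset)
  have sieve: "int (card (committees E V k)) = int ((n div 2) choose k) * 2 ^ k +
                 (\<Sum>\<G> | \<G> \<subseteq> \<P> \<and> \<G> \<noteq> {}. (-1) ^ card \<G> * avoiding \<G>)"
  proof -
    have "int (card (committees E V k)) = int (card (antipodal_free sv_neg V k)) +
            (\<Sum>\<G> | \<G> \<subseteq> \<P> \<and> \<G> \<noteq> {}. (-1) ^ card \<G> * avoiding \<G>)"
      unfolding avoiding_def
      by (rule int_card_committees_sieve[OF fin sym k]) (simp add: \<P>_def h_def n_def)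
    then show ?thesis
      using card_antipodal_free_symmetric[OF fin sym_e, of k] unfolding n_def by simp
  qed
  have "(\<Sum>\<G> | \<G> \<subseteq> \<P> \<and> \<G> \<noteq> {}. (-1) ^ card \<G> * avoiding \<G>) =
          (\<Sum>\<G>\<in>small_families. (-1) ^ card \<G> * avoiding \<G>)"
  proof (rule sum.mono_neutral_right)
    show "\<forall>\<G>\<in>{\<G>. \<G> \<subseteq> \<P> \<and> \<G> \<noteq> {}} - small_families. (-1) ^ card \<G> * avoiding \<G> = 0"
    proof
      fix \<G> assume "\<G> \<in> {\<G>. \<G> \<subseteq> \<P> \<and> \<G> \<noteq> {}} - small_families"
      then have "\<G> \<subseteq> halfspace_blocks E V h" "\<G> \<noteq> {}"
        "\<not> (1 \<le> card \<G> \<and> card \<G> \<le> (card V - k) choose h \<and> card (\<Union>\<G>) \<le> card V - k)"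
        unfolding small_families_def \<P>_def n_def by auto
      then have "antipodal_free sv_neg (V - \<Union>\<G>) k = {}"
        using contributing_families_small[OF fin] by blast
      then show "(-1) ^ card \<G> * avoiding \<G> = 0" unfolding avoiding_def by simp
    qed
  qed (use finP in \<open>auto simp: small_families_def\<close>)
  also have "\<dots> = (\<Sum>\<G>\<in>small_families. (-1) ^ card \<G> *
              (\<Sum>j=0..k. int ((card (\<Union>\<G> \<union> sv_neg ` \<Union>\<G>) - card (\<Union>\<G>)) choose j)
                   * int (((n - card (\<Union>\<G> \<union> sv_neg ` \<Union>\<G>)) div 2) choose (k - j)) * 2 ^ (k - j)))"
  proof (rule sum.cong[OF refl])
    fix \<G> assume "\<G> \<in> small_families"
    then have "\<Union>\<G> \<subseteq> V"
      unfolding small_families_def \<P>_def halfspace_blocks_def pos_halfspace_def by auto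
    then show "(-1) ^ card \<G> * avoiding \<G> = (-1) ^ card \<G> *
              (\<Sum>j=0..k. int ((card (\<Union>\<G> \<union> sv_neg ` \<Union>\<G>) - card (\<Union>\<G>)) choose j)
                   * int (((n - card (\<Union>\<G> \<union> sv_neg ` \<Union>\<G>)) div 2) choose (k - j)) * 2 ^ (k - j))"
      using card_antipodal_free_complement[OF fin sym_e, of "\<Union>\<G>" k]
      unfolding avoiding_def n_def by (simp add: mult.assoc)
  qed
  finally show ?thesis using sieve unfolding small_families_def by simp
qed

theorem mainTheorem5:
  fixes t k :: nat and L :: "(nat \<Rightarrow> int) set"
  assumes "t \<ge> 1"
    and "simple_om {1..t} L"
    and "1 \<le> k" and "2 * k \<le> card (topes {1..t} L)"
  shows "let T = topes {1..t} L; n = card T; h = (n - k + 1) div 2;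
             P = (\<Union>e\<in>{1..t}. {G. G \<subseteq> pos_halfspace T e \<and> card G = h})
         in int (kappa_ring {1..t} L k) =
            int ((n div 2) choose k) * 2 ^ k +
            (\<Sum>\<G>\<in>{\<G>. \<G> \<subseteq> P \<and> 1 \<le> card \<G> \<and> card \<G> \<le> (n - k) choose h
                        \<and> card (\<Union>\<G>) \<le> n - k}.
               (-1) ^ card \<G> *
               (\<Sum>j=0..k. int ((card (\<Union>\<G> \<union> sv_neg ` \<Union>\<G>) - card (\<Union>\<G>)) choose j)
                    * int (((n - card (\<Union>\<G> \<union> sv_neg ` \<Union>\<G>)) div 2) choose (k - j))
                    * 2 ^ (k - j)))"
proof -
  have "oriented_matroid_covectors {1..t} L"
    using assms(2) unfolding simple_om_def by blast
  then have sym: "symmetric_sign_set {1..t} (topes {1..t} L)"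
    by (rule symmetric_sign_set_topes)
  have fin: "finite (topes {1..t} L)"
    using assms(3,4) by (intro card_ge_0_finite) linarith
  have one: "1 \<in> {1..t}" using assms(1) by simp
  have "kappa_ring {1..t} L k = card (committees {1..t} (topes {1..t} L) k)"
    unfolding kappa_ring_def committees_def ..
  then show ?thesis
    using int_card_committees[OF fin sym one assms(3,4) refl refl refl]
    unfolding Let_def halfspace_blocks_def by simp
qed

end
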